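(* Let $G$ be a digraph that is not strongly connected, and suppose that $G$ has exactly one strongly connected subdigraph with at least one arc, and that this subdigraph is a directed cycle. Then the sequence of inner diameters $d(G),d(LG),d(L^2G),\dots$ is eventually periodic: there exist $k_0\ge0$ and $p\ge1$ such that $d(L^{k+p}G)=d(L^kG)$ for all $k\ge k_0$.
   Context: Digraphs are finite and may have loops and multiple arcs. The line digraph $LG$ has as vertex set the set of arcs of $G$, with an arc from $e$ to $f$ whenever the head of $e$ equals the tail of $f$; $L^0G=G$, $L^kG=L(L^{k-1}G)$. The inner diameter is $d(G)=\max\{\mathrm{dist}_G(u,v): \mathrm{dist}_G(u,v)<\infty\}$, where $\mathrm{dist}_G(u,v)$ is the length of a shortest directed walk from $u$ to $v$ ($\mathrm{dist}_G(u,u)=0$). A directed cycle is a digraph with vertices $v_0,\dots,v_{n-1}$ ($n\ge1$) and exactly the arcs $(v_i,v_{i+1\bmod n})$. *)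

theory Defs
  imports "Graph_Theory.Graph_Theory"
begin

text \<open>Universal element type closed under pairing, so that iterated line
digraphs stay in one type: arcs of the line digraph are pairs of arcs.\<close>
datatype 'a node = Leaf 'a | Pr "'a node" "'a node"

fun pr_fst :: "'a node \<Rightarrow> 'a node" where
  "pr_fst (Pr e f) = e"
| "pr_fst (Leaf x) = Leaf x"

fun pr_snd :: "'a node \<Rightarrow> 'a node" where
  "pr_snd (Pr e f) = f"
| "pr_snd (Leaf x) = Leaf x"

definition line_digraph :: "('a node, 'a node) pre_digraph \<Rightarrow> ('a node, 'a node) pre_digraph" where
  "line_digraph G = \<lparr> verts = arcs G,
      arcs = {Pr e f | e f. e \<in> arcs G \<and> f \<in> arcs G \<and> head G e = tail G f},
      tail = pr_fst, head = pr_snd \<rparr>"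

definition iter_line_digraph :: "nat \<Rightarrow> ('a node, 'a node) pre_digraph \<Rightarrow> ('a node, 'a node) pre_digraph" where
  "iter_line_digraph k G = (line_digraph ^^ k) G"

text \<open>Distance: length of a shortest directed walk (meaningful when reachable).\<close>
definition digraph_dist :: "('a,'b) pre_digraph \<Rightarrow> 'a \<Rightarrow> 'a \<Rightarrow> nat" where
  "digraph_dist G u v = (LEAST n. \<exists>p. pre_digraph.awalk G u p v \<and> length p = n)"

definition inner_diameter :: "('a,'b) pre_digraph \<Rightarrow> nat" where
  "inner_diameter G = Max {digraph_dist G u v | u v. u \<in> verts G \<and> v \<in> verts G \<and> u \<rightarrow>\<^sup>*\<^bsub>G\<^esub> v}"

definition is_directed_cycle :: "('a,'b) pre_digraph \<Rightarrow> bool" where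
  "is_directed_cycle H \<longleftrightarrow> (\<exists>n::nat. \<exists>v :: nat \<Rightarrow> 'a. \<exists>a :: nat \<Rightarrow> 'b.
     n \<ge> 1 \<and> inj_on v {..<n} \<and> verts H = v ` {..<n} \<and>
     bij_betw a {..<n} (arcs H) \<and>
     (\<forall>i<n. tail H (a i) = v i \<and> head H (a i) = v (Suc i mod n)))"

end

theory Submission
  imports Defs
begin

text \<open>
  A vertex of \<open>L\<^sup>k\<^sup>+\<^sup>1G\<close> is a walk of \<open>k+1\<close> arcs in \<open>G\<close>, and a walk of length \<open>m\<close> in
  \<open>L\<^sup>k\<^sup>+\<^sup>1G\<close> from \<open>u\<close> to \<open>v\<close> is a walk of \<open>k+1+m\<close> arcs in \<open>G\<close> that begins with \<open>u\<close> and
  ends with \<open>v\<close>. So \<open>d(L\<^sup>k\<^sup>+\<^sup>1G)\<close> is the largest least such shift \<open>m\<close>, over the pairs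
  of walks of length \<open>k+1\<close> that admit one.

  Let \<open>C\<close> be the unique nontrivial strong subdigraph, a cycle of length \<open>n\<close>. An arc lying
  between two arcs of \<open>C\<close> on a walk lies on a closed walk and hence on \<open>C\<close>, and a walk
  avoiding \<open>C\<close> has at most \<open>|V(G)|\<close> arcs. Hence a walk of length \<open>K > 2|V(G)|\<close> meets
  \<open>C\<close> within its first \<open>|V(G)|\<close> arcs and then runs around \<open>C\<close> at least once more.
  Inserting one more tour around \<open>C\<close> at its first arc of \<open>C\<close> is therefore a bijection
  between the walks of length \<open>K\<close> and \<open>K+n\<close>, and it preserves every shift. Therefore
  \<open>d(L\<^sup>k\<^sup>+\<^sup>nG) = d(L\<^sup>kG)\<close> for all \<open>k > 2|V(G)|\<close>.
\<close>

section \<open>Arc walks\<close>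

definition arc_walk :: "('a,'b) pre_digraph \<Rightarrow> 'b list \<Rightarrow> bool" where
  "arc_walk G w \<longleftrightarrow> set w \<subseteq> arcs G \<and> (\<forall>i. Suc i < length w \<longrightarrow> head G (w!i) = tail G (w!Suc i))"

lemma arc_walk_Nil [simp]: "arc_walk G []"
  by (simp add: arc_walk_def)

lemma arc_walk_single [simp]: "arc_walk G [x] \<longleftrightarrow> x \<in> arcs G"
  by (simp add: arc_walk_def)

lemma arc_walk_Cons_Cons [simp]:
  "arc_walk G (x # y # w) \<longleftrightarrow> x \<in> arcs G \<and> head G x = tail G y \<and> arc_walk G (y # w)"
proof
  assume walk: "arc_walk G (x # y # w)"
  have "head G ((y # w) ! i) = tail G ((y # w) ! Suc i)" if "Suc i < length (y # w)" for i
    using walk that unfolding arc_walk_def by (metis Suc_less_eq length_Cons nth_Cons_Suc)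
  then show "x \<in> arcs G \<and> head G x = tail G y \<and> arc_walk G (y # w)"
    using walk by (auto simp: arc_walk_def)
next
  assume "x \<in> arcs G \<and> head G x = tail G y \<and> arc_walk G (y # w)"
  then show "arc_walk G (x # y # w)"
    unfolding arc_walk_def by (auto simp: nth_Cons split: nat.splits)
qed

lemma arc_walk_Cons:
  "arc_walk G (x # w) \<longleftrightarrow> x \<in> arcs G \<and> (w \<noteq> [] \<longrightarrow> head G x = tail G (hd w)) \<and> arc_walk G w"
  by (cases w) auto

lemma arc_walk_append:
  "arc_walk G (xs @ ys) \<longleftrightarrow>
     arc_walk G xs \<and> arc_walk G ys \<and> (xs \<noteq> [] \<longrightarrow> ys \<noteq> [] \<longrightarrow> head G (last xs) = tail G (hd ys))"
  by (induction xs) (auto simp: arc_walk_Cons)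

lemma arc_walk_take: "arc_walk G w \<Longrightarrow> arc_walk G (take i w)"
  by (metis append_take_drop_id arc_walk_append)

lemma arc_walk_drop: "arc_walk G w \<Longrightarrow> arc_walk G (drop i w)"
  by (metis append_take_drop_id arc_walk_append)

lemma arc_walk_butlast: "arc_walk G w \<Longrightarrow> arc_walk G (butlast w)"
  by (simp add: butlast_conv_take arc_walk_take)

lemma arc_walk_tl: "arc_walk G w \<Longrightarrow> arc_walk G (tl w)"
  by (metis arc_walk_drop drop_Suc drop_0)

lemma arc_walk_nth_linked: "arc_walk G w \<Longrightarrow> Suc i < length w \<Longrightarrow> head G (w!i) = tail G (w!Suc i)"
  by (simp add: arc_walk_def)

lemma arc_walk_nth_in_arcs: "arc_walk G w \<Longrightarrow> i < length w \<Longrightarrow> w!i \<in> arcs G"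
  by (auto simp: arc_walk_def)

lemma (in wf_digraph) arc_walk_reachable:
  assumes "arc_walk G w" "i < j" "j < length w"
  shows "head G (w!i) \<rightarrow>\<^sup>* tail G (w!j)"
  using assms(2,3)
proof (induction j)
  case 0
  then show ?case by simp
next
  case (Suc j)
  have linked: "head G (w!j) = tail G (w!Suc j)"
    using Suc.prems assms(1) arc_walk_nth_linked by blast
  have arc: "w!j \<in> arcs G"
    using Suc.prems assms(1) arc_walk_nth_in_arcs by (metis Suc_lessD)
  show ?case
  proof (cases "i = j")
    case True
    then show ?thesis using linked arc by (metis head_in_verts reachable_refl)
  next
    case False
    then have "head G (w!i) \<rightarrow>\<^sup>* tail G (w!j)" using Suc by auto
    then show ?thesis using linked arc by (metis in_arcs_imp_in_arcs_ends reachable_adj_trans)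
  qed
qed

section \<open>Iterated line digraphs as digraphs of walks\<close>

definition walks :: "('a,'b) pre_digraph \<Rightarrow> nat \<Rightarrow> 'b list set" where
  "walks G K = {w. arc_walk G w \<and> length w = K}"

lemma walks_butlast_tl:
  "w \<in> walks G (Suc K) \<Longrightarrow> butlast w \<in> walks G K \<and> tl w \<in> walks G K"
  by (auto simp: walks_def arc_walk_butlast arc_walk_tl)

text \<open>A walk of \<open>k+1\<close> arcs of \<open>G\<close> as an arc of \<open>L\<^sup>kG\<close>: the arc from (the encoding of)
  its first \<open>k\<close> arcs to its last \<open>k\<close> arcs.\<close>

primrec walk_node :: "nat \<Rightarrow> 'x node list \<Rightarrow> 'x node" where
  "walk_node 0 w = hd w"
| "walk_node (Suc k) w = Pr (walk_node k (butlast w)) (walk_node k (tl w))"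

lemma butlast_tl_eqD:
  assumes "length u = length v" "2 \<le> length u" "butlast u = butlast v" "tl u = tl v"
  shows "u = v"
  using assms by (cases u; cases v) (auto split: if_splits)

lemma walk_node_inj:
  "length u = Suc k \<Longrightarrow> length v = Suc k \<Longrightarrow> walk_node k u = walk_node k v \<Longrightarrow> u = v"
proof (induction k arbitrary: u v)
  case 0
  then show ?case by (cases u; cases v) auto
next
  case (Suc k)
  have "butlast u = butlast v" "tl u = tl v"
    using Suc.IH Suc.prems by simp_all
  then show ?case using butlast_tl_eqD[of u v] Suc.prems(1,2) by simp
qed

lemma walk_node_eq_iff:
  "u \<in> walks G (Suc k) \<Longrightarrow> v \<in> walks G (Suc k) \<Longrightarrow> walk_node k u = walk_node k v \<longleftrightarrow> u = v"
  using walk_node_inj by (auto simp: walks_def)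

lemma glue_walks_iff:
  assumes "arc_walk G u" "arc_walk G u'" "length u' = length u" "2 \<le> length u"
  shows "(\<exists>w. arc_walk G w \<and> length w = Suc (length u) \<and> butlast w = u \<and> tl w = u') \<longleftrightarrow>
    tl u = butlast u'"
proof
  assume "\<exists>w. arc_walk G w \<and> length w = Suc (length u) \<and> butlast w = u \<and> tl w = u'"
  then show "tl u = butlast u'" using butlast_tl by metis
next
  assume overlap: "tl u = butlast u'"
  obtain x y r where u: "u = x # y # r"
    using assms(4) by (cases u rule: remdups_adj.cases) auto
  have "u' \<noteq> []" using assms(3,4) by auto
  then obtain z where u': "u' = (y # r) @ [z]"
    using overlap u by (metis append_butlast_last_id list.sel(3))
  have "arc_walk G (x # u')" using assms(1,2) u u' by simp
  moreover have "length (x # u') = Suc (length u)" "butlast (x # u') = u" "tl (x # u') = u'"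
    using u u' by auto
  ultimately show "\<exists>w. arc_walk G w \<and> length w = Suc (length u) \<and> butlast w = u \<and> tl w = u'"
    by blast
qed

lemma wf_line_digraph: "wf_digraph H \<Longrightarrow> wf_digraph (line_digraph H)"
  unfolding wf_digraph_def line_digraph_def by auto

lemma iter_line_digraph_0 [simp]: "iter_line_digraph 0 G = G"
  by (simp add: iter_line_digraph_def)

lemma iter_line_digraph_Suc: "iter_line_digraph (Suc k) G = line_digraph (iter_line_digraph k G)"
  by (simp add: iter_line_digraph_def)

lemma wf_iter_line_digraph: "wf_digraph G \<Longrightarrow> wf_digraph (iter_line_digraph k G)"
  by (induction k) (auto simp: iter_line_digraph_Suc wf_line_digraph)

definition codes_walks ::
    "('x node, 'x node) pre_digraph \<Rightarrow> nat \<Rightarrow> ('x node, 'x node) pre_digraph \<Rightarrow> bool" where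
  "codes_walks G k H \<longleftrightarrow> arcs H = walk_node k ` walks G (Suc k) \<and>
     (\<forall>u\<in>walks G (Suc k). \<forall>u'\<in>walks G (Suc k).
        head H (walk_node k u) = tail H (walk_node k u') \<longleftrightarrow>
        (\<exists>w\<in>walks G (Suc (Suc k)). butlast w = u \<and> tl w = u'))"

lemma walks_1: "walks G (Suc 0) = (\<lambda>e. [e]) ` arcs G"
  by (auto simp: walks_def length_Suc_conv)

lemma walks_2:
  "walks G (Suc (Suc 0)) = {[e, f] | e f. e \<in> arcs G \<and> f \<in> arcs G \<and> head G e = tail G f}"
  by (auto simp: walks_def length_Suc_conv)

lemma codes_walks_0: "codes_walks G 0 G"
proof -
  have "head G e = tail G f \<longleftrightarrow> (\<exists>w\<in>walks G (Suc (Suc 0)). butlast w = [e] \<and> tl w = [f])"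
    if "e \<in> arcs G" "f \<in> arcs G" for e f
  proof
    assume "head G e = tail G f"
    then have "[e, f] \<in> walks G (Suc (Suc 0))" using that by (simp add: walks_def)
    then show "\<exists>w\<in>walks G (Suc (Suc 0)). butlast w = [e] \<and> tl w = [f]" by force
  qed (auto simp: walks_2)
  then show ?thesis unfolding codes_walks_def walks_1 by (simp add: image_image)
qed

lemma codes_walks_line_digraph:
  assumes codes: "codes_walks G k H"
  shows "codes_walks G (Suc k) (line_digraph H)"
proof -
  have arcs: "arcs H = walk_node k ` walks G (Suc k)"
    and adj: "\<And>u u'. u \<in> walks G (Suc k) \<Longrightarrow> u' \<in> walks G (Suc k) \<Longrightarrow>
      head H (walk_node k u) = tail H (walk_node k u') \<longleftrightarrow>
      (\<exists>w\<in>walks G (Suc (Suc k)). butlast w = u \<and> tl w = u')"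
    using codes unfolding codes_walks_def by blast+
  have "arcs (line_digraph H) = walk_node (Suc k) ` walks G (Suc (Suc k))"
  proof (intro set_eqI iffI)
    fix x assume "x \<in> arcs (line_digraph H)"
    then obtain u u' where "u \<in> walks G (Suc k)" "u' \<in> walks G (Suc k)"
      "x = Pr (walk_node k u) (walk_node k u')" "head H (walk_node k u) = tail H (walk_node k u')"
      using arcs by (auto simp: line_digraph_def)
    then show "x \<in> walk_node (Suc k) ` walks G (Suc (Suc k))" using adj by force
  next
    fix x assume "x \<in> walk_node (Suc k) ` walks G (Suc (Suc k))"
    then obtain w where w: "w \<in> walks G (Suc (Suc k))" "x = walk_node (Suc k) w" by blast
    then have "head H (walk_node k (butlast w)) = tail H (walk_node k (tl w))"
      using adj walks_butlast_tl by blast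
    then show "x \<in> arcs (line_digraph H)"
      using w walks_butlast_tl arcs by (auto simp: line_digraph_def)
  qed
  moreover have "head (line_digraph H) (walk_node (Suc k) u) =
        tail (line_digraph H) (walk_node (Suc k) u') \<longleftrightarrow>
      (\<exists>w\<in>walks G (Suc (Suc (Suc k))). butlast w = u \<and> tl w = u')"
    if u: "u \<in> walks G (Suc (Suc k))" and u': "u' \<in> walks G (Suc (Suc k))" for u u'
  proof -
    have "head (line_digraph H) (walk_node (Suc k) u) = tail (line_digraph H) (walk_node (Suc k) u')
        \<longleftrightarrow> walk_node k (tl u) = walk_node k (butlast u')"
      by (simp add: line_digraph_def)
    also have "\<dots> \<longleftrightarrow> tl u = butlast u'"
      using u u' walks_butlast_tl walk_node_eq_iff by metis
    also have "\<dots> \<longleftrightarrow> (\<exists>w\<in>walks G (Suc (Suc (Suc k))). butlast w = u \<and> tl w = u')"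
      using glue_walks_iff[of G u u'] u u' by (auto simp: walks_def)
    finally show ?thesis .
  qed
  ultimately show ?thesis unfolding codes_walks_def by blast
qed

lemma codes_walks_iter_line_digraph: "codes_walks G k (iter_line_digraph k G)"
  by (induction k) (simp_all add: codes_walks_0 codes_walks_line_digraph iter_line_digraph_Suc)

definition walk_shift :: "('a,'b) pre_digraph \<Rightarrow> nat \<Rightarrow> 'b list \<Rightarrow> 'b list \<Rightarrow> nat \<Rightarrow> bool" where
  "walk_shift G K u v m \<longleftrightarrow> (\<exists>W. arc_walk G W \<and> length W = K + m \<and> take K W = u \<and> drop m W = v)"

lemma walk_shift_Suc:
  assumes u: "u \<in> walks G (Suc k)"
  shows "(\<exists>w\<in>walks G (Suc (Suc k)). butlast w = u \<and> walk_shift G (Suc k) (tl w) v m) \<longleftrightarrow>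
    walk_shift G (Suc k) u v (Suc m)"
proof
  assume "\<exists>w\<in>walks G (Suc (Suc k)). butlast w = u \<and> walk_shift G (Suc k) (tl w) v m"
  then obtain w W where w: "arc_walk G w" "length w = Suc (Suc k)" "butlast w = u"
    and W: "arc_walk G W" "length W = Suc k + m" "take (Suc k) W = tl w" "drop m W = v"
    unfolding walks_def walk_shift_def by blast
  then obtain x w' where "w = x # w'" by (cases w) auto
  with w W have w: "arc_walk G (x # w')" "length w' = Suc k" "butlast (x # w') = u"
    and W: "arc_walk G W" "length W = Suc k + m" "take (Suc k) W = w'" "drop m W = v"
    by simp_all
  have "w' \<noteq> []" using w(2) by auto
  then have hd_W: "hd W = hd w'"
    using W(3) by (metis hd_take zero_less_Suc)
  have "arc_walk G (x # W)"
    using w(1) W(1) hd_W \<open>w' \<noteq> []\<close> by (simp add: arc_walk_Cons)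
  moreover have "take (Suc k) (x # W) = u"
    using W(2,3) w(3) \<open>w' \<noteq> []\<close> by (auto simp: butlast_take)
  ultimately show "walk_shift G (Suc k) u v (Suc m)"
    unfolding walk_shift_def using W(2,4) by (intro exI[of _ "x # W"]) simp
next
  assume "walk_shift G (Suc k) u v (Suc m)"
  then obtain W where W: "arc_walk G W" "length W = Suc k + Suc m" "take (Suc k) W = u"
      "drop (Suc m) W = v"
    unfolding walk_shift_def by blast
  let ?w = "take (Suc (Suc k)) W"
  have "?w \<in> walks G (Suc (Suc k))" "butlast ?w = u"
    using W by (simp_all add: walks_def arc_walk_take butlast_take)
  moreover have "walk_shift G (Suc k) (tl ?w) v m"
    unfolding walk_shift_def
    by (rule exI[of _ "tl W"]) (use W in \<open>simp add: arc_walk_tl drop_Suc tl_take\<close>)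
  ultimately show "\<exists>w\<in>walks G (Suc (Suc k)). butlast w = u \<and> walk_shift G (Suc k) (tl w) v m"
    by blast
qed

lemma awalk_line_digraph_iff_walk_shift:
  assumes wf: "wf_digraph H" and codes: "codes_walks G k H"
    and u: "u \<in> walks G (Suc k)" and v: "v \<in> walks G (Suc k)"
  shows "(\<exists>p. pre_digraph.awalk (line_digraph H) (walk_node k u) p (walk_node k v) \<and> length p = m)
    \<longleftrightarrow> walk_shift G (Suc k) u v m"
  using u
proof (induction m arbitrary: u)
  case 0
  interpret L: wf_digraph "line_digraph H" using wf wf_line_digraph by blast
  have "verts (line_digraph H) = walk_node k ` walks G (Suc k)"
    using codes by (simp add: codes_walks_def line_digraph_def)
  then have "(\<exists>p. L.awalk (walk_node k u) p (walk_node k v) \<and> length p = 0) \<longleftrightarrow> u = v"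
    using 0 v walk_node_eq_iff by (force simp: L.awalk_Nil_iff)
  also have "\<dots> \<longleftrightarrow> walk_shift G (Suc k) u v 0"
    using 0 by (auto simp: walk_shift_def walks_def)
  finally show ?case .
next
  case (Suc m)
  let ?L = "line_digraph H"
  interpret L: wf_digraph ?L using wf wf_line_digraph by blast
  have arcs: "arcs ?L = walk_node (Suc k) ` walks G (Suc (Suc k))"
    using codes_walks_line_digraph[OF codes] by (simp add: codes_walks_def)
  have "(\<exists>p. L.awalk (walk_node k u) p (walk_node k v) \<and> length p = Suc m)
     \<longleftrightarrow> (\<exists>e p. L.awalk (walk_node k u) (e # p) (walk_node k v) \<and> length p = m)"
    by (metis length_Suc_conv)
  also have "\<dots> \<longleftrightarrow> (\<exists>e\<in>arcs ?L. walk_node k u = tail ?L e \<and>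
          (\<exists>p. L.awalk (head ?L e) p (walk_node k v) \<and> length p = m))"
    by (auto simp: L.awalk_Cons_iff)
  also have "\<dots> \<longleftrightarrow> (\<exists>w\<in>walks G (Suc (Suc k)). butlast w = u \<and>
          (\<exists>p. L.awalk (walk_node k (tl w)) p (walk_node k v) \<and> length p = m))"
  proof -
    have "walk_node k u = walk_node k (butlast w) \<longleftrightarrow> butlast w = u"
      if "w \<in> walks G (Suc (Suc k))" for w
      using that Suc.prems walks_butlast_tl walk_node_eq_iff by metis
    then show ?thesis unfolding arcs by (auto simp: line_digraph_def)
  qed
  also have "\<dots> \<longleftrightarrow> (\<exists>w\<in>walks G (Suc (Suc k)). butlast w = u \<and> walk_shift G (Suc k) (tl w) v m)"
    using Suc.IH walks_butlast_tl by blast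
  also have "\<dots> \<longleftrightarrow> walk_shift G (Suc k) u v (Suc m)"
    using walk_shift_Suc Suc.prems by blast
  finally show ?case .
qed

definition shift_distances :: "('a,'b) pre_digraph \<Rightarrow> nat \<Rightarrow> nat set" where
  "shift_distances G K = {LEAST m. walk_shift G K u v m | u v.
     u \<in> walks G K \<and> v \<in> walks G K \<and> (\<exists>m. walk_shift G K u v m)}"

lemma inner_diameter_line_digraph:
  assumes wf: "wf_digraph H" and codes: "codes_walks G k H"
  shows "inner_diameter (line_digraph H) = Max (shift_distances G (Suc k))"
proof -
  let ?L = "line_digraph H"
  interpret L: wf_digraph ?L using wf wf_line_digraph by blast
  have verts: "verts ?L = walk_node k ` walks G (Suc k)"
    using codes by (simp add: codes_walks_def line_digraph_def)
  have dist:
      "digraph_dist ?L (walk_node k u) (walk_node k v) = (LEAST m. walk_shift G (Suc k) u v m)"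
    and reach: "walk_node k u \<rightarrow>\<^sup>*\<^bsub>?L\<^esub> walk_node k v \<longleftrightarrow> (\<exists>m. walk_shift G (Suc k) u v m)"
    if "u \<in> walks G (Suc k)" "v \<in> walks G (Suc k)" for u v
  proof -
    note walk_shift = awalk_line_digraph_iff_walk_shift[OF wf codes that]
    show "digraph_dist ?L (walk_node k u) (walk_node k v) = (LEAST m. walk_shift G (Suc k) u v m)"
      unfolding digraph_dist_def walk_shift ..
    show "walk_node k u \<rightarrow>\<^sup>*\<^bsub>?L\<^esub> walk_node k v \<longleftrightarrow> (\<exists>m. walk_shift G (Suc k) u v m)"
      unfolding L.reachable_awalk using walk_shift by blast
  qed
  have "{digraph_dist ?L x y | x y. x \<in> verts ?L \<and> y \<in> verts ?L \<and> x \<rightarrow>\<^sup>*\<^bsub>?L\<^esub> y} =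
      shift_distances G (Suc k)"
  proof (intro set_eqI iffI)
    fix d assume "d \<in> {digraph_dist ?L x y | x y. x \<in> verts ?L \<and> y \<in> verts ?L \<and> x \<rightarrow>\<^sup>*\<^bsub>?L\<^esub> y}"
    then obtain u v where "u \<in> walks G (Suc k)" "v \<in> walks G (Suc k)"
      "d = digraph_dist ?L (walk_node k u) (walk_node k v)" "walk_node k u \<rightarrow>\<^sup>*\<^bsub>?L\<^esub> walk_node k v"
      unfolding verts by blast
    then have "d = (LEAST m. walk_shift G (Suc k) u v m)" "\<exists>m. walk_shift G (Suc k) u v m"
      using dist reach by simp_all
    then show "d \<in> shift_distances G (Suc k)"
      unfolding shift_distances_def using \<open>u \<in> walks G (Suc k)\<close> \<open>v \<in> walks G (Suc k)\<close> by blast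
  next
    fix d assume "d \<in> shift_distances G (Suc k)"
    then obtain u v where "u \<in> walks G (Suc k)" "v \<in> walks G (Suc k)"
      "d = (LEAST m. walk_shift G (Suc k) u v m)" "\<exists>m. walk_shift G (Suc k) u v m"
      unfolding shift_distances_def by blast
    then have "d = digraph_dist ?L (walk_node k u) (walk_node k v)"
      "walk_node k u \<in> verts ?L" "walk_node k v \<in> verts ?L"
      "walk_node k u \<rightarrow>\<^sup>*\<^bsub>?L\<^esub> walk_node k v"
      using dist reach verts by simp_all
    then show "d \<in> {digraph_dist ?L x y | x y. x \<in> verts ?L \<and> y \<in> verts ?L \<and> x \<rightarrow>\<^sup>*\<^bsub>?L\<^esub> y}"
      by blast
  qed
  then show ?thesis unfolding inner_diameter_def by simp
qed

lemma inner_diameter_iter_line_digraph: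
  "wf_digraph G \<Longrightarrow> inner_diameter (iter_line_digraph (Suc k) G) = Max (shift_distances G (Suc k))"
  by (simp add: iter_line_digraph_Suc inner_diameter_line_digraph wf_iter_line_digraph
      codes_walks_iter_line_digraph)

section \<open>Walks in a digraph with a unique cycle\<close>

locale unique_cycle_digraph = fin_digraph G for G :: "('a,'b) pre_digraph" +
  fixes C :: "('a,'b) pre_digraph" and n :: nat and cv :: "nat \<Rightarrow> 'a" and ca :: "nat \<Rightarrow> 'b"
  assumes subgraph_C: "subgraph C G" and strongly_connected_C: "strongly_connected C"
    and unique_C: "\<And>H. subgraph H G \<Longrightarrow> strongly_connected H \<Longrightarrow> arcs H \<noteq> {} \<Longrightarrow> H = C"
    and cycle_length_pos: "1 \<le> n"
    and inj_cv: "inj_on cv {..<n}"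
    and bij_ca: "bij_betw ca {..<n} (arcs C)"
    and tail_ca: "\<And>i. i < n \<Longrightarrow> tail G (ca i) = cv i"
    and head_ca: "\<And>i. i < n \<Longrightarrow> head G (ca i) = cv (Suc i mod n)"
begin

abbreviation N :: nat where "N \<equiv> card (verts G)"

lemma arcs_C_subset: "arcs C \<subseteq> arcs G"
  using subgraph_C by (auto simp: subgraph_def)

lemma tail_in_verts_C: "x \<in> arcs C \<Longrightarrow> tail G x \<in> verts C"
proof -
  assume "x \<in> arcs C"
  moreover have "wf_digraph C" using subgraph_C by (auto simp: subgraph_def)
  moreover have "tail C = tail G" using subgraph_C by (auto simp: subgraph_def compatible_def)
  ultimately show ?thesis by (metis wf_digraph.tail_in_verts)
qed

text \<open>The strong component containing \<open>e\<close> has an arc, so by uniqueness it is \<open>C\<close>.\<close>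

lemma in_arcs_C_if_reaches_back:
  assumes e: "e \<in> arcs G" and returns: "head G e \<rightarrow>\<^sup>*\<^bsub>G\<^esub> tail G e"
  shows "e \<in> arcs C"
proof -
  let ?u = "tail G e"
  have u: "?u \<in> verts G" using e by simp
  then have scc: "G \<restriction> scc_of ?u \<in> sccs"
    by (intro in_verts_sccsD_sccs scc_of_in_sccs_verts)
  have "?u \<in> scc_of ?u" using u by (rule in_scc_of_self)
  moreover have "head G e \<in> scc_of ?u"
    using e returns unfolding scc_of_def by (auto dest: in_arcs_imp_in_arcs_ends)
  ultimately have e_scc: "e \<in> arcs (G \<restriction> scc_of ?u)" using e by simp
  have "G \<restriction> scc_of ?u = C"
    using scc e_scc
    by (intro unique_C) (auto intro: induced_imp_subgraph in_sccs_imp_induced elim: in_sccsE)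
  with e_scc show ?thesis by simp
qed

lemma length_walk_avoiding_C:
  assumes walk: "arc_walk G w" and avoid: "\<forall>x\<in>set w. x \<notin> arcs C"
  shows "length w \<le> N"
proof -
  have "distinct (map (tail G) w)"
  proof (rule ccontr)
    assume "\<not> distinct (map (tail G) w)"
    then obtain i j where ij: "i < j" "j < length w" "tail G (w!i) = tail G (w!j)"
      unfolding distinct_conv_nth by (auto, metis linorder_neqE_nat)
    then have "head G (w!i) \<rightarrow>\<^sup>*\<^bsub>G\<^esub> tail G (w!i)" using arc_walk_reachable walk by metis
    then have "w!i \<in> arcs C"
      using in_arcs_C_if_reaches_back arc_walk_nth_in_arcs walk ij by (meson less_trans)
    then show False using avoid ij by (meson nth_mem less_trans)
  qed
  moreover have "set (map (tail G) w) \<subseteq> verts G" using walk by (auto simp: arc_walk_def)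
  then have "card (set (map (tail G) w)) \<le> N" by (simp add: card_mono)
  ultimately show ?thesis using distinct_card by fastforce
qed

lemma arc_walk_between_arcs_C:
  assumes walk: "arc_walk G w" and "i \<le> l" "l \<le> j" "j < length w"
    and on_C: "w!i \<in> arcs C" "w!j \<in> arcs C"
  shows "w!l \<in> arcs C"
proof (cases "l = j")
  case True
  then show ?thesis using on_C by simp
next
  case False
  then have lj: "l < j" using assms by simp
  have to_j: "head G (w!l) \<rightarrow>\<^sup>*\<^bsub>G\<^esub> tail G (w!j)" using arc_walk_reachable walk assms lj by blast
  have "tail G (w!j) \<rightarrow>\<^sup>*\<^bsub>C\<^esub> tail G (w!i)"
    using strongly_connected_C tail_in_verts_C on_C by (auto simp: strongly_connected_def)
  then have j_to_i: "tail G (w!j) \<rightarrow>\<^sup>*\<^bsub>G\<^esub> tail G (w!i)" using reachable_mono subgraph_C by blast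
  have i_to_l: "tail G (w!i) \<rightarrow>\<^sup>*\<^bsub>G\<^esub> tail G (w!l)"
  proof (cases "i = l")
    case True
    then show ?thesis
      using assms arc_walk_nth_in_arcs
      by (metis less_le_trans tail_in_verts reachable_refl lj less_imp_le)
  next
    case False
    then have "head G (w!i) \<rightarrow>\<^sup>*\<^bsub>G\<^esub> tail G (w!l)" using arc_walk_reachable assms lj by simp
    moreover have "tail G (w!i) \<rightarrow>\<^bsub>G\<^esub> head G (w!i)" using assms arc_walk_nth_in_arcs
      by (metis in_arcs_imp_in_arcs_ends le_less_trans lj order.strict_trans1)
    ultimately show ?thesis by (metis adj_reachable_trans)
  qed
  have "head G (w!l) \<rightarrow>\<^sup>*\<^bsub>G\<^esub> tail G (w!l)" using to_j j_to_i i_to_l reachable_trans by blast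
  then show ?thesis
    using in_arcs_C_if_reaches_back assms arc_walk_nth_in_arcs lj by (meson less_trans)
qed

lemma arc_walk_stays_on_C:
  assumes walk: "arc_walk G w" and "f \<le> l" "w!f \<in> arcs C" and long: "l + N < length w"
  shows "w!l \<in> arcs C"
proof (rule ccontr)
  assume off: "w!l \<notin> arcs C"
  have "x \<notin> arcs C" if x_after: "x \<in> set (drop l w)" for x
  proof
    assume x: "x \<in> arcs C"
    obtain j where j: "j < length w - l" "x = w!(l+j)"
      using x_after by (auto simp: in_set_conv_nth)
    then have "w!l \<in> arcs C" using arc_walk_between_arcs_C[of w f l "l+j"] assms x by simp
    then show False using off by simp
  qed
  then have "length (drop l w) \<le> N" using length_walk_avoiding_C arc_walk_drop walk by blast
  then show False using long by simp
qed

definition cycle_succ :: "'b \<Rightarrow> 'b" where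
  "cycle_succ x = ca (Suc (inv_into {..<n} ca x) mod n)"

lemma arcs_C_eq: "arcs C = ca ` {..<n}"
  using bij_ca by (simp add: bij_betw_def)

lemma cycle_succ_ca: "j < n \<Longrightarrow> cycle_succ (ca j) = ca (Suc j mod n)"
  using bij_ca by (simp add: cycle_succ_def bij_betw_def inv_into_f_f)

lemma funpow_cycle_succ_ca: "j < n \<Longrightarrow> (cycle_succ ^^ t) (ca j) = ca ((j + t) mod n)"
proof (induction t)
  case 0
  then show ?case by simp
next
  case (Suc t)
  have "(cycle_succ ^^ Suc t) (ca j) = cycle_succ (ca ((j + t) mod n))" using Suc by simp
  also have "\<dots> = ca (Suc ((j + t) mod n) mod n)"
    using cycle_length_pos by (intro cycle_succ_ca) simp
  also have "\<dots> = ca ((j + Suc t) mod n)" by (simp add: mod_Suc_eq)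
  finally show ?case .
qed

lemma funpow_cycle_succ_n: "x \<in> arcs C \<Longrightarrow> (cycle_succ ^^ n) x = x"
  using arcs_C_eq funpow_cycle_succ_ca by auto

lemma funpow_cycle_succ_in_arcs_C: "x \<in> arcs C \<Longrightarrow> (cycle_succ ^^ t) x \<in> arcs C"
  using arcs_C_eq funpow_cycle_succ_ca cycle_length_pos by auto

lemma tail_cycle_succ: "x \<in> arcs C \<Longrightarrow> tail G (cycle_succ x) = head G x"
  using arcs_C_eq cycle_succ_ca tail_ca head_ca by auto

lemma cycle_succ_unique:
  assumes "x \<in> arcs C" "y \<in> arcs C" "tail G y = head G x"
  shows "y = cycle_succ x"
proof -
  obtain j where j: "j < n" "x = ca j" using assms arcs_C_eq by auto
  obtain j' where j': "j' < n" "y = ca j'" using assms arcs_C_eq by auto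
  have "cv j' = cv (Suc j mod n)" using assms j j' tail_ca head_ca by simp
  then have "j' = Suc j mod n" using inj_cv j' cycle_length_pos by (auto dest: inj_onD)
  then show ?thesis using j j' cycle_succ_ca by simp
qed

lemma arc_walk_next_on_C:
  "arc_walk G w \<Longrightarrow> Suc i < length w \<Longrightarrow> w!i \<in> arcs C \<Longrightarrow> w!Suc i \<in> arcs C \<Longrightarrow>
    w!Suc i = cycle_succ (w!i)"
  using cycle_succ_unique arc_walk_nth_linked by metis

lemma arc_walk_on_C_funpow:
  assumes walk: "arc_walk G w" and "i \<le> j" "j < length w"
    and on_C: "\<forall>l. i \<le> l \<and> l \<le> j \<longrightarrow> w!l \<in> arcs C"
  shows "w!j = (cycle_succ ^^ (j - i)) (w!i)"
  using assms(2,3)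
proof (induction j rule: dec_induct)
  case base
  then show ?case by simp
next
  case (step l)
  have "w!Suc l = cycle_succ (w!l)"
    using step on_C by (intro arc_walk_next_on_C[OF walk]) auto
  then show ?case using step by (simp add: Suc_diff_le)
qed

lemma arc_walk_on_C_period:
  assumes "arc_walk G w" "l + n < length w" "\<forall>t. l \<le> t \<and> t \<le> l + n \<longrightarrow> w!t \<in> arcs C"
  shows "w!l = w!(l + n)"
  using arc_walk_on_C_funpow[of w l "l + n"] funpow_cycle_succ_n assms by simp

definition tour :: "'b \<Rightarrow> 'b list" where
  "tour x = map (\<lambda>t. (cycle_succ ^^ t) x) [0..<n]"

lemma length_tour [simp]: "length (tour x) = n"
  by (simp add: tour_def)

lemma tour_nth: "t < n \<Longrightarrow> tour x ! t = (cycle_succ ^^ t) x"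
  by (simp add: tour_def)

lemma tour_not_Nil: "tour x \<noteq> []"
  using cycle_length_pos by (simp add: tour_def)

lemma hd_tour: "hd (tour x) = x"
  using cycle_length_pos by (simp add: tour_def hd_map upt_conv_Cons)

lemma arc_walk_tour: "x \<in> arcs C \<Longrightarrow> arc_walk G (tour x)"
  using arcs_C_subset
  by (auto simp: arc_walk_def tour_def funpow_cycle_succ_in_arcs_C tail_cycle_succ)

lemma head_last_tour:
  assumes "x \<in> arcs C"
  shows "head G (last (tour x)) = tail G x"
proof -
  have "last (tour x) = (cycle_succ ^^ (n - 1)) x"
    using cycle_length_pos tour_not_Nil by (simp add: last_conv_nth tour_nth)
  then have "head G (last (tour x)) = tail G (cycle_succ ((cycle_succ ^^ (n - 1)) x))"
    using tail_cycle_succ funpow_cycle_succ_in_arcs_C assms by simp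
  also have "cycle_succ ((cycle_succ ^^ (n - 1)) x) = (cycle_succ ^^ n) x"
    using cycle_length_pos by (metis Suc_diff_1 funpow.simps(2) comp_apply less_le_trans zero_less_one)
  finally show ?thesis using funpow_cycle_succ_n assms by simp
qed

lemma tour_snoc:
  assumes "x \<in> arcs C"
  shows "tour x @ [x] = x # tour (cycle_succ x)"
proof -
  have "tour x @ [x] = map (\<lambda>t. (cycle_succ ^^ t) x) [0..<Suc n]"
    using funpow_cycle_succ_n assms by (simp add: tour_def)
  also have "\<dots> = x # map (\<lambda>t. (cycle_succ ^^ Suc t) x) [0..<n]"
    by (simp add: map_upt_Suc del: upt_Suc)
  also have "\<dots> = x # tour (cycle_succ x)"
    by (simp add: tour_def funpow_Suc_right del: funpow.simps)
  finally show ?thesis .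
qed

definition splice :: "nat \<Rightarrow> 'b list \<Rightarrow> 'b list" where
  "splice i w = take i w @ tour (w!i) @ drop i w"

definition cut :: "nat \<Rightarrow> 'b list \<Rightarrow> 'b list" where
  "cut i w = take i w @ drop (i + n) w"

lemma length_splice [simp]: "i \<le> length w \<Longrightarrow> length (splice i w) = length w + n"
  by (simp add: splice_def)

lemma nth_splice:
  assumes "i < length w" "j < length w + n"
  shows "splice i w ! j =
    (if j < i then w!j else if j < i + n then (cycle_succ ^^ (j - i)) (w!i) else w!(j - n))"
  using assms by (auto simp: splice_def nth_append tour_nth min_def)

lemma cut_splice: "i \<le> length w \<Longrightarrow> cut i (splice i w) = w"
  by (simp add: cut_def splice_def)

lemma take_splice: "i < K \<Longrightarrow> K \<le> length w \<Longrightarrow> take (K + n) (splice i w) = splice i (take K w)"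
  by (simp add: splice_def take_append drop_take min_def)

lemma drop_splice: "m \<le> j \<Longrightarrow> j < length w \<Longrightarrow> drop m (splice j w) = splice (j - m) (drop m w)"
  by (simp add: splice_def drop_take)

lemma take_cut: "i \<le> K \<Longrightarrow> K \<le> length w \<Longrightarrow> take K (cut i w) = cut i (take (K + n) w)"
  by (simp add: cut_def take_append take_drop min_def)

lemma drop_cut: "m \<le> j \<Longrightarrow> j < length w \<Longrightarrow> drop m (cut j w) = cut (j - m) (drop m w)"
  by (simp add: cut_def drop_take add.commute)

lemma splice_eq:
  assumes walk: "arc_walk G w" and "i \<le> j" "j < length w"
    and on_C: "\<forall>l. i \<le> l \<and> l \<le> j \<longrightarrow> w!l \<in> arcs C"
  shows "splice i w = splice j w"
  using assms(2,3)
proof (induction j rule: dec_induct)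
  case base
  then show ?case by simp
next
  case (step l)
  have succ: "w!Suc l = cycle_succ (w!l)"
    using step on_C by (intro arc_walk_next_on_C[OF walk]) auto
  have "take (Suc l) w @ tour (w!Suc l) @ drop (Suc l) w =
      take l w @ (tour (w!l) @ [w!l]) @ drop (Suc l) w"
    using step on_C by (simp add: succ tour_snoc take_Suc_conv_app_nth)
  also have "\<dots> = splice l w"
    using step by (simp add: splice_def Cons_nth_drop_Suc)
  finally show ?case using step by (simp add: splice_def)
qed

lemma cut_eq:
  assumes walk: "arc_walk G w" and "i \<le> j" "j + n < length w"
    and on_C: "\<forall>l. i \<le> l \<and> l \<le> j + n \<longrightarrow> w!l \<in> arcs C"
  shows "cut i w = cut j w"
  using assms(2,3)
proof (induction j rule: dec_induct)
  case base
  then show ?case by simp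
next
  case (step l)
  have "w!l = w!(l + n)"
    using step on_C by (intro arc_walk_on_C_period[OF walk]) auto
  then have "cut l w = cut (Suc l) w"
    using step by (simp add: cut_def Cons_nth_drop_Suc take_Suc_conv_app_nth)
  then show ?case using step by simp
qed

lemma arc_walk_splice:
  assumes walk: "arc_walk G w" and "i < length w" "w!i \<in> arcs C"
  shows "arc_walk G (splice i w)"
proof -
  have tour_rest: "arc_walk G (tour (w!i) @ drop i w)"
    unfolding arc_walk_append using assms arc_walk_tour head_last_tour arc_walk_drop tour_not_Nil
    by (simp add: hd_drop_conv_nth)
  have "head G (last (take i w)) = tail G (w!i)" if "take i w \<noteq> []"
  proof -
    have "last (take i w) = w!(i - 1)"
      using that assms by (simp add: last_conv_nth)
    then show ?thesis using arc_walk_nth_linked[OF walk, of "i - 1"] that assms by simp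
  qed
  then show ?thesis unfolding splice_def arc_walk_append[of G "take i w"]
    using tour_rest walk arc_walk_take hd_tour tour_not_Nil by simp
qed

lemma arc_walk_cut:
  assumes walk: "arc_walk G w" and long: "i + n < length w" and period: "w!i = w!(i + n)"
  shows "arc_walk G (cut i w)"
proof -
  have cut: "cut i w = take (Suc i) w @ drop (Suc (i + n)) w"
    using assms by (simp add: cut_def Cons_nth_drop_Suc take_Suc_conv_app_nth)
  have "head G (last (take (Suc i) w)) = tail G (hd (drop (Suc (i + n)) w))"
    if "drop (Suc (i + n)) w \<noteq> []"
  proof -
    have "Suc (i + n) < length w" using that by simp
    then show ?thesis
      using arc_walk_nth_linked[OF walk] long period
      by (simp add: take_Suc_conv_app_nth hd_drop_conv_nth)
  qed
  then show ?thesis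
    unfolding cut arc_walk_append using walk arc_walk_take arc_walk_drop by blast
qed

section \<open>Pumping walks around the cycle\<close>

definition first_on_C :: "'b list \<Rightarrow> nat" where
  "first_on_C w = (LEAST i. i < length w \<and> w!i \<in> arcs C)"

lemma first_on_C_props:
  assumes "\<exists>i<length w. w!i \<in> arcs C"
  shows "first_on_C w < length w" "w!first_on_C w \<in> arcs C"
    and "\<And>i. i < first_on_C w \<Longrightarrow> w!i \<notin> arcs C"
proof -
  from assms obtain i where "i < length w \<and> w!i \<in> arcs C" by blast
  then have "first_on_C w < length w \<and> w!first_on_C w \<in> arcs C"
    unfolding first_on_C_def by (rule LeastI)
  then show "first_on_C w < length w" "w!first_on_C w \<in> arcs C" by auto
  fix i assume "i < first_on_C w"
  then show "w!i \<notin> arcs C" using \<open>first_on_C w < length w\<close> unfolding first_on_C_def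
    by (metis (mono_tags, lifting) not_less_Least order.strict_trans)
qed

lemma first_on_C_eqI:
  assumes "i < length w" "w!i \<in> arcs C" "\<And>j. j < i \<Longrightarrow> w!j \<notin> arcs C"
  shows "first_on_C w = i"
  unfolding first_on_C_def by (rule Least_equality) (use assms in \<open>auto simp: not_less[symmetric]\<close>)

lemma arc_walk_meets_C: "arc_walk G w \<Longrightarrow> N < length w \<Longrightarrow> \<exists>i<length w. w!i \<in> arcs C"
  using length_walk_avoiding_C by (metis in_set_conv_nth not_le)

lemma first_on_C_le:
  assumes walk: "arc_walk G w" and meets: "\<exists>i<length w. w!i \<in> arcs C"
  shows "first_on_C w \<le> N"
proof -
  have "\<forall>x\<in>set (take (first_on_C w) w). x \<notin> arcs C"
    using first_on_C_props[OF meets] by (auto simp: in_set_conv_nth)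
  then have "length (take (first_on_C w) w) \<le> N"
    using length_walk_avoiding_C arc_walk_take walk by blast
  then show ?thesis using first_on_C_props[OF meets] by simp
qed

definition pump :: "'b list \<Rightarrow> 'b list" where
  "pump w = splice (first_on_C w) w"

definition unpump :: "'b list \<Rightarrow> 'b list" where
  "unpump w = cut (first_on_C w) w"

context
  fixes u :: "'b list" and K :: nat
  assumes u: "u \<in> walks G K" and long: "N < K"
begin

lemma first_on_C_long:
  shows first_on_C_lt: "first_on_C u < K"
    and nth_first_on_C: "u!first_on_C u \<in> arcs C"
    and nth_before_first_on_C: "\<And>j. j < first_on_C u \<Longrightarrow> u!j \<notin> arcs C"
  using first_on_C_props[OF arc_walk_meets_C] u long by (auto simp: walks_def)

lemma pump_in_walks: "pump u \<in> walks G (K + n)"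
  using arc_walk_splice first_on_C_lt nth_first_on_C u by (simp add: walks_def pump_def)

lemma nth_pump_before_first_on_C: "j < first_on_C u \<Longrightarrow> pump u ! j \<notin> arcs C"
  using first_on_C_lt nth_before_first_on_C u by (simp add: walks_def pump_def nth_splice)

lemma nth_pump_on_C:
  assumes "first_on_C u \<le> j" "j \<le> first_on_C u + n"
  shows "pump u ! j \<in> arcs C"
  using first_on_C_lt nth_first_on_C u assms
  by (auto simp: walks_def pump_def nth_splice funpow_cycle_succ_in_arcs_C)

lemma first_on_C_pump: "first_on_C (pump u) = first_on_C u"
  using pump_in_walks first_on_C_lt nth_pump_on_C nth_pump_before_first_on_C
  by (intro first_on_C_eqI) (auto simp: walks_def)

lemma unpump_pump: "unpump (pump u) = u"
  unfolding unpump_def first_on_C_pump using first_on_C_lt u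
  by (simp add: walks_def pump_def cut_splice)

end

context
  fixes W :: "'b list" and K :: nat
  assumes W: "W \<in> walks G (K + n)" and long: "2 * N < K"
begin

lemma tour_after_first_on_C:
  shows first_on_C_tour_lt: "first_on_C W + n < length W"
    and nth_tour_after_first_on_C:
      "\<And>l. first_on_C W \<le> l \<Longrightarrow> l \<le> first_on_C W + n \<Longrightarrow> W!l \<in> arcs C"
proof -
  have walk: "arc_walk G W" "length W = K + n" using W by (simp_all add: walks_def)
  have meets: "\<exists>i<length W. W!i \<in> arcs C" using arc_walk_meets_C[of W] walk long by simp
  have le: "first_on_C W \<le> N" using first_on_C_le walk meets by blast
  then show "first_on_C W + n < length W" using walk long by simp
  fix l assume "first_on_C W \<le> l" "l \<le> first_on_C W + n"
  then show "W!l \<in> arcs C"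
    using arc_walk_stays_on_C[OF walk(1)] first_on_C_props(2)[OF meets] le walk long by simp
qed

lemma first_on_C_tour_period: "W!first_on_C W = W!(first_on_C W + n)"
  using W first_on_C_tour_lt nth_tour_after_first_on_C
  by (intro arc_walk_on_C_period) (auto simp: walks_def)

lemma unpump_in_walks: "unpump W \<in> walks G K"
  using arc_walk_cut first_on_C_tour_lt first_on_C_tour_period W
  by (simp add: walks_def unpump_def cut_def)

lemma pump_unpump: "pump (unpump W) = W"
proof -
  let ?f = "first_on_C W"
  have walk: "arc_walk G W" using W by (simp add: walks_def)
  note lt = first_on_C_tour_lt and on_C = nth_tour_after_first_on_C
  have meets: "\<exists>i<length W. W!i \<in> arcs C" using lt on_C by auto
  have nth_f: "unpump W ! ?f = W!?f"
    using lt first_on_C_tour_period by (simp add: unpump_def cut_def nth_append)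
  have "first_on_C (unpump W) = ?f"
  proof (rule first_on_C_eqI)
    show "?f < length (unpump W)" using lt by (simp add: unpump_def cut_def)
    show "unpump W ! ?f \<in> arcs C" using nth_f on_C by simp
    show "unpump W ! j \<notin> arcs C" if "j < ?f" for j
      using that lt first_on_C_props(3)[OF meets] by (simp add: unpump_def cut_def nth_append)
  qed
  then have "pump (unpump W) = take ?f W @ tour (unpump W ! ?f) @ drop (?f + n) W"
    using lt by (simp add: pump_def splice_def unpump_def cut_def)
  also have "tour (unpump W ! ?f) = take n (drop ?f W)"
  proof (rule nth_equalityI)
    show "length (tour (unpump W ! ?f)) = length (take n (drop ?f W))" using lt by simp
    fix t assume "t < length (tour (unpump W ! ?f))"
    then have "t < n" by simp
    then have "W!(?f + t) = (cycle_succ ^^ t) (W!?f)"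
      using arc_walk_on_C_funpow[OF walk, of ?f "?f + t"] on_C lt by simp
    then show "tour (unpump W ! ?f) ! t = take n (drop ?f W) ! t"
      using \<open>t < n\<close> lt nth_f by (simp add: tour_nth)
  qed
  also have "take ?f W @ take n (drop ?f W) @ drop (?f + n) W = W"
    by (metis append.assoc append_take_drop_id take_add)
  finally show ?thesis .
qed

end

text \<open>
  In a walk realising a shift between \<open>u\<close> and \<open>v\<close>, every arc between the first arc of \<open>C\<close>
  in \<open>u\<close> and the first arc of \<open>C\<close> in \<open>v\<close> lies on \<open>C\<close>. So inserting (removing) the tour at
  either position gives the same walk, and it realises the same shift between the pumped
  (unpumped) ends.
\<close>

lemma walk_shift_pump:
  assumes u: "u \<in> walks G K" and v: "v \<in> walks G K" and long: "N < K"
    and shift: "walk_shift G K u v m"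
  shows "walk_shift G (K + n) (pump u) (pump v) m"
proof -
  let ?f = "first_on_C u" and ?g = "first_on_C v"
  obtain W where W: "arc_walk G W" "length W = K + m" "take K W = u" "drop m W = v"
    using shift unfolding walk_shift_def by blast
  have W_u: "W!j = u!j" if "j < K" for j using W that by auto
  have W_v: "W!(m + j) = v!j" if "j < K" for j using W that by auto
  have f_lt: "?f < K" and g_lt: "?g < K" using first_on_C_lt u v long by blast+
  have W_f: "W!?f \<in> arcs C" using W_u f_lt nth_first_on_C[OF u long] by simp
  have W_g: "W!(m + ?g) \<in> arcs C" using W_v g_lt nth_first_on_C[OF v long] by simp
  have "?f \<le> m + ?g"
  proof (rule ccontr)
    assume "\<not> ?f \<le> m + ?g"
    then have "W!(m + ?g) = u!(m + ?g)" "m + ?g < ?f" using W_u f_lt by auto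
    then show False using nth_before_first_on_C[OF u long] W_g by simp
  qed
  moreover have "\<forall>l. ?f \<le> l \<and> l \<le> m + ?g \<longrightarrow> W!l \<in> arcs C"
    using arc_walk_between_arcs_C[OF W(1) _ _ _ W_f W_g] W(2) g_lt by auto
  ultimately have same: "splice ?f W = splice (m + ?g) W"
    using splice_eq[OF W(1)] W(2) g_lt by simp
  have "arc_walk G (splice ?f W)" using arc_walk_splice W(1,2) W_f f_lt by simp
  moreover have "length (splice ?f W) = (K + n) + m" using W(2) f_lt by simp
  moreover have "take (K + n) (splice ?f W) = pump u"
    using take_splice[of ?f K W] f_lt W by (simp add: pump_def)
  moreover have "drop m (splice ?f W) = pump v"
    unfolding same using drop_splice[of m "m + ?g" W] W g_lt by (simp add: pump_def)
  ultimately show ?thesis unfolding walk_shift_def by blast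
qed

lemma walk_shift_of_pump:
  assumes u: "u \<in> walks G K" and v: "v \<in> walks G K" and long: "N < K"
    and shift: "walk_shift G (K + n) (pump u) (pump v) m"
  shows "walk_shift G K u v m"
proof -
  let ?f = "first_on_C u" and ?g = "first_on_C v"
  obtain W where W: "arc_walk G W" "length W = (K + n) + m" "take (K + n) W = pump u"
      "drop m W = pump v"
    using shift unfolding walk_shift_def by blast
  have W_u: "W!j = pump u ! j" if "j < K + n" for j using W that by (metis nth_take)
  have W_v: "W!(m + j) = pump v ! j" if "j < K + n" for j
    using W that by (metis add.commute le_add2 nth_drop)
  have f_lt: "?f < K" and g_lt: "?g < K" using first_on_C_lt u v long by blast+
  have W_f: "W!?f \<in> arcs C" using W_u f_lt nth_pump_on_C[OF u long] by simp
  have W_g: "W!(m + ?g) \<in> arcs C" using W_v g_lt nth_pump_on_C[OF v long] by simp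
  have W_gn: "W!(m + ?g + n) \<in> arcs C"
    using W_v[of "?g + n"] g_lt nth_pump_on_C[OF v long] by (simp add: add.assoc)
  have "?f \<le> m + ?g"
  proof (rule ccontr)
    assume "\<not> ?f \<le> m + ?g"
    then have "W!(m + ?g) = pump u ! (m + ?g)" "m + ?g < ?f" using W_u f_lt by auto
    then show False using nth_pump_before_first_on_C[OF u long] W_g by simp
  qed
  moreover have on_C: "\<forall>l. ?f \<le> l \<and> l \<le> m + ?g + n \<longrightarrow> W!l \<in> arcs C"
    using arc_walk_between_arcs_C[OF W(1) _ _ _ W_f W_gn] W(2) g_lt by auto
  ultimately have same: "cut ?f W = cut (m + ?g) W"
    using cut_eq[OF W(1)] W(2) g_lt by simp
  have lt: "?f + n < length W" using W(2) f_lt by simp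
  have "W!?f = W!(?f + n)"
    using arc_walk_on_C_period[OF W(1) lt] on_C \<open>?f \<le> m + ?g\<close> by auto
  then have "arc_walk G (cut ?f W)" using arc_walk_cut[OF W(1) lt] by blast
  moreover have "length (cut ?f W) = K + m" using lt W(2) by (simp add: cut_def)
  moreover have "take K (cut ?f W) = u"
    using take_cut[of ?f K W] f_lt W(2,3) unpump_pump[OF u long]
    by (simp add: unpump_def first_on_C_pump[OF u long])
  moreover have "drop m (cut ?f W) = v"
    unfolding same using drop_cut[of m "m + ?g" W] W(2,4) g_lt unpump_pump[OF v long]
    by (simp add: unpump_def first_on_C_pump[OF v long])
  ultimately show ?thesis unfolding walk_shift_def by blast
qed

lemma shift_distances_pump:
  assumes long: "2 * N < K"
  shows "shift_distances G (K + n) = shift_distances G K"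
proof -
  have shift: "walk_shift G (K + n) (pump u) (pump v) m \<longleftrightarrow> walk_shift G K u v m"
    if "u \<in> walks G K" "v \<in> walks G K" for u v m
    using walk_shift_pump walk_shift_of_pump that long by auto
  show ?thesis
  proof (intro set_eqI iffI)
    fix d assume "d \<in> shift_distances G (K + n)"
    then obtain u v where uv: "u \<in> walks G (K + n)" "v \<in> walks G (K + n)"
        "\<exists>m. walk_shift G (K + n) u v m" "d = (LEAST m. walk_shift G (K + n) u v m)"
      unfolding shift_distances_def by blast
    then have "unpump u \<in> walks G K" "unpump v \<in> walks G K"
      "\<exists>m. walk_shift G K (unpump u) (unpump v) m"
      "d = (LEAST m. walk_shift G K (unpump u) (unpump v) m)"
      using unpump_in_walks pump_unpump long shift[of "unpump u" "unpump v"] by simp_all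
    then show "d \<in> shift_distances G K" unfolding shift_distances_def by blast
  next
    fix d assume "d \<in> shift_distances G K"
    then obtain u v where "u \<in> walks G K" "v \<in> walks G K"
        "\<exists>m. walk_shift G K u v m" "d = (LEAST m. walk_shift G K u v m)"
      unfolding shift_distances_def by blast
    then have "pump u \<in> walks G (K + n)" "pump v \<in> walks G (K + n)"
      "\<exists>m. walk_shift G (K + n) (pump u) (pump v) m"
      "d = (LEAST m. walk_shift G (K + n) (pump u) (pump v) m)"
      using pump_in_walks long shift by simp_all
    then show "d \<in> shift_distances G (K + n)" unfolding shift_distances_def by blast
  qed
qed

end

lemma unique_cycle_digraph_exists:
  assumes fin: "fin_digraph G"
    and unique: "\<exists>!H. subgraph H G \<and> strongly_connected H \<and> arcs H \<noteq> {}"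
    and cycle: "\<forall>H. subgraph H G \<and> strongly_connected H \<and> arcs H \<noteq> {} \<longrightarrow> is_directed_cycle H"
  obtains C n cv ca where "unique_cycle_digraph G C n cv ca"
proof -
  from unique obtain C where C: "subgraph C G \<and> strongly_connected C \<and> arcs C \<noteq> {}"
    by blast
  have "is_directed_cycle C" using C cycle by blast
  then obtain n cv ca where n: "1 \<le> n" "inj_on cv {..<n}" "bij_betw ca {..<n} (arcs C)"
      "\<forall>i<n. tail C (ca i) = cv i \<and> head C (ca i) = cv (Suc i mod n)"
    unfolding is_directed_cycle_def by blast
  have ends: "tail C = tail G" "head C = head G"
    using C by (auto simp: subgraph_def compatible_def)
  have "unique_cycle_digraph G C n cv ca"
  proof (intro unique_cycle_digraph.intro unique_cycle_digraph_axioms.intro fin)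
    show "H = C" if "subgraph H G" "strongly_connected H" "arcs H \<noteq> {}" for H
      using unique C that by blast
  qed (use C n ends in simp_all)
  then show ?thesis by (rule that)
qed

theorem proposition3p1:
  fixes G :: "('a node, 'a node) pre_digraph"
  assumes "fin_digraph G"
    and "\<not> strongly_connected G"
    and "\<exists>!H. subgraph H G \<and> strongly_connected H \<and> arcs H \<noteq> {}"
    and "\<forall>H. subgraph H G \<and> strongly_connected H \<and> arcs H \<noteq> {} \<longrightarrow> is_directed_cycle H"
  shows "\<exists>k0 p. p \<ge> 1 \<and> (\<forall>k\<ge>k0.
           inner_diameter (iter_line_digraph (k + p) G) = inner_diameter (iter_line_digraph k G))"
proof -
  obtain C n cv ca where "unique_cycle_digraph G C n cv ca"
    using unique_cycle_digraph_exists assms(1,3,4) by blast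
  then interpret unique_cycle_digraph G C n cv ca .
  have "inner_diameter (iter_line_digraph (k + n) G) = inner_diameter (iter_line_digraph k G)"
    if long: "2 * N < k" for k
  proof -
    obtain k' where k: "k = Suc k'" using long by (cases k) auto
    have "inner_diameter (iter_line_digraph (k + n) G) = Max (shift_distances G (k + n))"
      using inner_diameter_iter_line_digraph[OF wf_digraph_axioms, of "k' + n"] k by simp
    also have "\<dots> = Max (shift_distances G k)" using shift_distances_pump long by simp
    also have "\<dots> = inner_diameter (iter_line_digraph k G)"
      using inner_diameter_iter_line_digraph[OF wf_digraph_axioms, of k'] k by simp
    finally show ?thesis .
  qed
  then show ?thesis using cycle_length_pos by (intro exI[of _ "Suc (2 * N)"] exI[of _ n]) auto
qed

end
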